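(* Let $n\geq 3$ and $k\geq 2$ be integers. Then $$\Phi_k (P_n^2)=\frac{1}{8}\left( k^{n^2} -k^{\lceil \frac{n^2}{2}\rceil} - 2k^{n\lceil\frac{n}{2}\rceil}-2k^{\frac{n(n+1)}{2} } +2k^{\lceil \frac{n}{2}\rceil^2}+2k^{\lceil \frac{n}{2}\rceil \lceil \frac{n+1}{2}\rceil}\right).$$
   Context: $P_n$ is the path on $n$ vertices and $P_n^2=P_n\square P_n$ is the Cartesian product ($V(G\square H)=V(G)\times V(H)$, $(g,h)\sim(g',h')$ iff $g=g'$ and $hh'\in E(H)$, or $gg'\in E(G)$ and $h=h'$), i.e. the $n\times n$ grid. A vertex coloring is distinguishing if the identity is the only automorphism preserving it. Two colorings $c_1,c_2$ of a graph $G$ are equivalent if there is an automorphism $\alpha$ of $G$ with $c_1(v)=c_2(\alpha(v))$ for all $v\in V(G)$. $\Phi_k(G)$ denotes the number of non-equivalent distinguishing vertex colorings of $G$ with colors from $\{1,\ldots,k\}$ (not all colors need be used). *)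

theory Defs
  imports Complex_Main "HOL-Library.FuncSet"
begin

definition path_V :: "nat \<Rightarrow> nat set" where
  "path_V n = {0..<n}"

definition path_E :: "nat \<Rightarrow> nat \<Rightarrow> bool" where
  "path_E x y \<longleftrightarrow> x + 1 = y \<or> y + 1 = x"

definition cart_E :: "('a \<Rightarrow> 'a \<Rightarrow> bool) \<Rightarrow> ('b \<Rightarrow> 'b \<Rightarrow> bool)
    \<Rightarrow> ('a \<times> 'b) \<Rightarrow> ('a \<times> 'b) \<Rightarrow> bool" where
  "cart_E E F u v \<longleftrightarrow>
     (fst u = fst v \<and> F (snd u) (snd v)) \<or> (E (fst u) (fst v) \<and> snd u = snd v)"

definition grid_V :: "nat \<Rightarrow> (nat \<times> nat) set" where
  "grid_V n = path_V n \<times> path_V n"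

definition grid_E :: "(nat \<times> nat) \<Rightarrow> (nat \<times> nat) \<Rightarrow> bool" where
  "grid_E = cart_E path_E path_E"

definition is_aut :: "'a set \<Rightarrow> ('a \<Rightarrow> 'a \<Rightarrow> bool) \<Rightarrow> ('a \<Rightarrow> 'a) \<Rightarrow> bool" where
  "is_aut V E \<sigma> \<longleftrightarrow> bij_betw \<sigma> V V \<and> (\<forall>u\<in>V. \<forall>v\<in>V. E u v \<longleftrightarrow> E (\<sigma> u) (\<sigma> v))"

definition distinguishing :: "'a set \<Rightarrow> ('a \<Rightarrow> 'a \<Rightarrow> bool) \<Rightarrow> ('a \<Rightarrow> 'c) \<Rightarrow> bool" where
  "distinguishing V E c \<longleftrightarrow>
     (\<forall>\<sigma>. is_aut V E \<sigma> \<and> (\<forall>v\<in>V. c (\<sigma> v) = c v) \<longrightarrow> (\<forall>v\<in>V. \<sigma> v = v))"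

definition equiv_col :: "'a set \<Rightarrow> ('a \<Rightarrow> 'a \<Rightarrow> bool) \<Rightarrow> ('a \<Rightarrow> 'c) \<Rightarrow> ('a \<Rightarrow> 'c) \<Rightarrow> bool" where
  "equiv_col V E c1 c2 \<longleftrightarrow> (\<exists>\<alpha>. is_aut V E \<alpha> \<and> (\<forall>v\<in>V. c1 v = c2 (\<alpha> v)))"

definition dist_cols :: "'a set \<Rightarrow> ('a \<Rightarrow> 'a \<Rightarrow> bool) \<Rightarrow> nat \<Rightarrow> ('a \<Rightarrow> nat) set" where
  "dist_cols V E k = {c \<in> V \<rightarrow>\<^sub>E {1..k}. distinguishing V E c}"

definition Phi :: "nat \<Rightarrow> 'a set \<Rightarrow> ('a \<Rightarrow> 'a \<Rightarrow> bool) \<Rightarrow> nat" where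
  "Phi k V E = card (dist_cols V E k //
      {(c1, c2). c1 \<in> dist_cols V E k \<and> c2 \<in> dist_cols V E k \<and> equiv_col V E c1 c2})"

end

theory Submission
  imports Defs
begin

(* For n >= 2 an automorphism of the grid sends the corner (0,0) to a corner (the vertices of
   degree 2), and it is determined by the image of the edge from (0,0) to (1,0): once that edge
   is fixed, row by row every further vertex is the only not yet fixed (common) neighbour of
   fixed vertices. Hence the automorphism group is the dihedral group of the square, of order 8,
   and it acts freely on distinguishing colourings, so 8 Phi_k is their number. A colouring is
   not distinguishing iff it is invariant under the half-turn, one of the two mirrors or one of
   the two diagonal reflections (quarter-turn invariance implies half-turn invariance). The
   half-turn forms a Klein four-group both with the two mirrors and with the two diagonal
   reflections, and a mirror composed with a diagonal reflection is a quarter-turn; so in the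
   inclusion-exclusion all intersections reduce to the invariant colourings of one of the two
   Klein groups, and each of the seven terms is k to the number of orbits. *)

section \<open>Automorphisms and equivalent colourings\<close>

(* Extensional, so that the elements of Aut V E correspond one-to-one to automorphisms of V. *)
definition Aut :: "'a set \<Rightarrow> ('a \<Rightarrow> 'a \<Rightarrow> bool) \<Rightarrow> ('a \<Rightarrow> 'a) set" where
  "Aut V E = {\<sigma> \<in> V \<rightarrow>\<^sub>E V. is_aut V E \<sigma>}"

lemma is_aut_imp_bij_betw: "is_aut V E \<sigma> \<Longrightarrow> bij_betw \<sigma> V V"
  by (simp add: is_aut_def)

lemma is_aut_mem: "is_aut V E \<sigma> \<Longrightarrow> x \<in> V \<Longrightarrow> \<sigma> x \<in> V"
  by (meson bij_betw_apply is_aut_imp_bij_betw)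

lemma is_aut_inj_on: "is_aut V E \<sigma> \<Longrightarrow> inj_on \<sigma> V"
  by (simp add: is_aut_def bij_betw_def)

lemma is_aut_adj_iff: "is_aut V E \<sigma> \<Longrightarrow> u \<in> V \<Longrightarrow> v \<in> V \<Longrightarrow> E (\<sigma> u) (\<sigma> v) \<longleftrightarrow> E u v"
  by (simp add: is_aut_def)

lemma is_aut_id: "is_aut V E id"
  by (simp add: is_aut_def)

lemma is_aut_comp:
  assumes \<sigma>: "is_aut V E \<sigma>" and \<tau>: "is_aut V E \<tau>" shows "is_aut V E (\<sigma> \<circ> \<tau>)"
  unfolding is_aut_def
  using bij_betw_trans[OF is_aut_imp_bij_betw[OF \<tau>] is_aut_imp_bij_betw[OF \<sigma>]]
    is_aut_adj_iff[OF \<sigma> is_aut_mem[OF \<tau>] is_aut_mem[OF \<tau>]] is_aut_adj_iff[OF \<tau>] by simp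

lemma inv_into_aut_apply: "is_aut V E \<sigma> \<Longrightarrow> x \<in> V \<Longrightarrow> \<sigma> (inv_into V \<sigma> x) = x"
  by (rule bij_betw_inv_into_right[OF is_aut_imp_bij_betw])

lemma is_aut_inv_into:
  assumes \<sigma>: "is_aut V E \<sigma>" shows "is_aut V E (inv_into V \<sigma>)"
proof -
  have bij: "bij_betw (inv_into V \<sigma>) V V" by (rule bij_betw_inv_into[OF is_aut_imp_bij_betw[OF \<sigma>]])
  moreover have "E u v \<longleftrightarrow> E (inv_into V \<sigma> u) (inv_into V \<sigma> v)" if "u \<in> V" "v \<in> V" for u v
  proof -
    have "inv_into V \<sigma> u \<in> V" "inv_into V \<sigma> v \<in> V" using bij that by (simp_all add: bij_betw_apply)
    from is_aut_adj_iff[OF \<sigma> this] show ?thesis by (simp add: inv_into_aut_apply[OF \<sigma>] that)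
  qed
  ultimately show ?thesis by (simp add: is_aut_def)
qed

lemma is_aut_cong:
  assumes \<sigma>: "is_aut V E \<sigma>" and eq: "\<And>x. x \<in> V \<Longrightarrow> \<tau> x = \<sigma> x" shows "is_aut V E \<tau>"
proof -
  have "bij_betw \<tau> V V" using bij_betw_cong[of V \<tau> \<sigma> V] eq is_aut_imp_bij_betw[OF \<sigma>] by simp
  then show ?thesis using \<sigma> by (simp add: is_aut_def eq)
qed

lemma is_aut_byWitness:
  assumes "\<And>p. p \<in> V \<Longrightarrow> g p \<in> V" and "\<And>p. p \<in> V \<Longrightarrow> g' p \<in> V"
    and "\<And>p. p \<in> V \<Longrightarrow> g' (g p) = p" and "\<And>p. p \<in> V \<Longrightarrow> g (g' p) = p"
    and "\<And>p q. p \<in> V \<Longrightarrow> q \<in> V \<Longrightarrow> E (g p) (g q) \<longleftrightarrow> E p q"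
  shows "is_aut V E g"
proof -
  have "bij_betw g V V" by (rule bij_betw_byWitness[where f' = g']) (use assms in auto)
  then show ?thesis by (simp add: is_aut_def assms(5))
qed

lemma restrict_mem_Aut: "is_aut V E \<sigma> \<Longrightarrow> restrict \<sigma> V \<in> Aut V E"
  unfolding Aut_def using is_aut_cong[of V E \<sigma> "restrict \<sigma> V"] by (simp add: is_aut_mem)

lemma aut_fixes_last_common_nbr:
  assumes \<tau>: "is_aut V E \<tau>" and X: "X \<subseteq> V" "\<forall>x\<in>X. \<tau> x = x"
    and y: "y \<in> V" "\<forall>x\<in>X. E x y"
    and others: "\<And>z. z \<in> V \<Longrightarrow> \<forall>x\<in>X. E x z \<Longrightarrow> z \<noteq> y \<Longrightarrow> \<tau> z = z"
  shows "\<tau> y = y"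
proof (rule ccontr)
  assume ne: "\<tau> y \<noteq> y"
  have "\<tau> y \<in> V" using \<tau> y(1) by (rule is_aut_mem)
  moreover have "\<forall>x\<in>X. E x (\<tau> y)"
  proof
    fix x assume "x \<in> X"
    then show "E x (\<tau> y)" using is_aut_adj_iff[OF \<tau> _ y(1), of x] X y(2) by auto
  qed
  ultimately have "\<tau> (\<tau> y) = \<tau> y" using ne by (rule others)
  then have "\<tau> y = y" using inj_onD[OF is_aut_inj_on[OF \<tau>]] \<open>\<tau> y \<in> V\<close> y(1) by blast
  with ne show False ..
qed

definition nbrs :: "'a set \<Rightarrow> ('a \<Rightarrow> 'a \<Rightarrow> bool) \<Rightarrow> 'a \<Rightarrow> 'a set" where
  "nbrs V E x = {y \<in> V. E x y}"

lemma aut_image_nbrs: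
  assumes \<sigma>: "is_aut V E \<sigma>" and x: "x \<in> V"
  shows "\<sigma> ` nbrs V E x = nbrs V E (\<sigma> x)"
proof (intro equalityI subsetI)
  fix z assume "z \<in> \<sigma> ` nbrs V E x"
  then show "z \<in> nbrs V E (\<sigma> x)"
    using is_aut_mem[OF \<sigma>] is_aut_adj_iff[OF \<sigma> x] by (auto simp: nbrs_def)
next
  fix z assume z: "z \<in> nbrs V E (\<sigma> x)"
  then obtain y where y: "y \<in> V" "z = \<sigma> y"
    using bij_betw_imp_surj_on[OF is_aut_imp_bij_betw[OF \<sigma>]] by (auto simp: nbrs_def)
  then have "E x y" using z is_aut_adj_iff[OF \<sigma> x y(1)] by (simp add: nbrs_def)
  with y show "z \<in> \<sigma> ` nbrs V E x" by (auto simp: nbrs_def)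
qed

lemma card_nbrs_aut:
  assumes \<sigma>: "is_aut V E \<sigma>" and x: "x \<in> V"
  shows "card (nbrs V E (\<sigma> x)) = card (nbrs V E x)"
proof -
  have "inj_on \<sigma> (nbrs V E x)"
    using is_aut_inj_on[OF \<sigma>] by (rule inj_on_subset) (auto simp: nbrs_def)
  then show ?thesis by (simp add: card_image flip: aut_image_nbrs[OF assms])
qed

lemma distinguishing_imp_aut_eq:
  assumes c: "distinguishing V E c" and \<alpha>: "is_aut V E \<alpha>" and \<beta>: "is_aut V E \<beta>"
    and eq: "\<And>v. v \<in> V \<Longrightarrow> c (\<alpha> v) = c (\<beta> v)" and v: "v \<in> V"
  shows "\<alpha> v = \<beta> v"
proof -
  let ?\<gamma> = "\<alpha> \<circ> inv_into V \<beta>"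
  have "is_aut V E ?\<gamma>" by (simp add: \<alpha> \<beta> is_aut_comp is_aut_inv_into)
  moreover have "c (?\<gamma> w) = c w" if "w \<in> V" for w
    using eq[OF is_aut_mem[OF is_aut_inv_into[OF \<beta>] that]] inv_into_aut_apply[OF \<beta> that] by simp
  ultimately have "?\<gamma> (\<beta> v) = \<beta> v" using c is_aut_mem[OF \<beta> v] unfolding distinguishing_def by blast
  then show ?thesis using inv_into_f_f[OF is_aut_inj_on[OF \<beta>] v] by simp
qed

lemma distinguishing_comp_aut:
  assumes c: "distinguishing V E c" and \<alpha>: "is_aut V E \<alpha>"
  shows "distinguishing V E (c \<circ> \<alpha>)"
  unfolding distinguishing_def
proof (intro allI impI ballI)
  fix \<sigma> v assume \<sigma>: "is_aut V E \<sigma> \<and> (\<forall>v\<in>V. (c \<circ> \<alpha>) (\<sigma> v) = (c \<circ> \<alpha>) v)" and v: "v \<in> V"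
  then have "c ((\<alpha> \<circ> \<sigma>) w) = c (\<alpha> w)" if "w \<in> V" for w
    using that by simp
  then have "(\<alpha> \<circ> \<sigma>) v = \<alpha> v"
    using distinguishing_imp_aut_eq[OF c is_aut_comp[OF \<alpha>] \<alpha> _ v] \<sigma> by blast
  then have "\<alpha> (\<sigma> v) = \<alpha> v" by simp
  moreover have "\<sigma> v \<in> V" using is_aut_mem[of V E \<sigma> v] \<sigma> v by blast
  ultimately show "\<sigma> v = v" using v by (rule inj_onD[OF is_aut_inj_on[OF \<alpha>]])
qed

lemma distinguishing_cong:
  "distinguishing V E c \<Longrightarrow> (\<And>v. v \<in> V \<Longrightarrow> c' v = c v) \<Longrightarrow> distinguishing V E c'"
  unfolding distinguishing_def by (metis is_aut_mem)

lemma equiv_col_refl: "equiv_col V E c c"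
  unfolding equiv_col_def using is_aut_id by fastforce

lemma equiv_col_sym:
  assumes "equiv_col V E c1 c2" shows "equiv_col V E c2 c1"
proof -
  obtain \<alpha> where \<alpha>: "is_aut V E \<alpha>" and c1: "\<forall>v\<in>V. c1 v = c2 (\<alpha> v)"
    using assms unfolding equiv_col_def by blast
  have "c2 v = c1 (inv_into V \<alpha> v)" if "v \<in> V" for v
  proof -
    have "inv_into V \<alpha> v \<in> V" using is_aut_mem[OF is_aut_inv_into[OF \<alpha>] that] .
    then show ?thesis using c1 inv_into_aut_apply[OF \<alpha> that] by simp
  qed
  then show ?thesis unfolding equiv_col_def using is_aut_inv_into[OF \<alpha>] by blast
qed

lemma equiv_col_trans:
  assumes "equiv_col V E c1 c2" "equiv_col V E c2 c3" shows "equiv_col V E c1 c3"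
proof -
  obtain \<alpha> \<beta> where \<alpha>: "is_aut V E \<alpha>" "\<forall>v\<in>V. c1 v = c2 (\<alpha> v)"
    and \<beta>: "is_aut V E \<beta>" "\<forall>v\<in>V. c2 v = c3 (\<beta> v)"
    using assms unfolding equiv_col_def by blast
  have "c1 v = c3 ((\<beta> \<circ> \<alpha>) v)" if "v \<in> V" for v
    using \<alpha>(2) \<beta>(2) is_aut_mem[OF \<alpha>(1) that] that by simp
  then show ?thesis unfolding equiv_col_def using is_aut_comp[OF \<beta>(1) \<alpha>(1)] by blast
qed

definition col_equiv :: "'a set \<Rightarrow> ('a \<Rightarrow> 'a \<Rightarrow> bool) \<Rightarrow> nat \<Rightarrow> (('a \<Rightarrow> nat) \<times> ('a \<Rightarrow> nat)) set" where
  "col_equiv V E k = {(c1, c2). c1 \<in> dist_cols V E k \<and> c2 \<in> dist_cols V E k \<and> equiv_col V E c1 c2}"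

lemma Phi_eq_card_quotient: "Phi k V E = card (dist_cols V E k // col_equiv V E k)"
  by (simp add: Phi_def col_equiv_def)

lemma equiv_col_equiv: "equiv (dist_cols V E k) (col_equiv V E k)"
proof (rule equivI)
  show "col_equiv V E k \<subseteq> dist_cols V E k \<times> dist_cols V E k"
    by (auto simp: col_equiv_def)
  show "refl_on (dist_cols V E k) (col_equiv V E k)"
    by (auto simp: refl_on_def col_equiv_def equiv_col_refl)
  show "sym (col_equiv V E k)"
  proof (rule symI)
    fix x y assume "(x, y) \<in> col_equiv V E k"
    then show "(y, x) \<in> col_equiv V E k"
      unfolding col_equiv_def using equiv_col_sym[of V E x y] by simp
  qed
  show "trans (col_equiv V E k)"
  proof (rule transI)
    fix x y z assume "(x, y) \<in> col_equiv V E k" "(y, z) \<in> col_equiv V E k"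
    then show "(x, z) \<in> col_equiv V E k"
      unfolding col_equiv_def using equiv_col_trans[of V E x y z] by simp
  qed
qed

lemma col_equiv_class:
  assumes c: "c \<in> dist_cols V E k"
  shows "col_equiv V E k `` {c} = (\<lambda>\<alpha>. restrict (c \<circ> \<alpha>) V) ` Aut V E"
proof (intro equalityI subsetI)
  fix c' assume "c' \<in> col_equiv V E k `` {c}"
  then have c': "c' \<in> dist_cols V E k" and "equiv_col V E c c'"
    unfolding col_equiv_def by auto
  from equiv_col_sym[OF this(2)]
  obtain \<alpha> where \<alpha>: "is_aut V E \<alpha>" "\<forall>v\<in>V. c' v = c (\<alpha> v)"
    unfolding equiv_col_def by blast
  have "c' = restrict (c \<circ> restrict \<alpha> V) V"
    using c' \<alpha>(2) unfolding dist_cols_def by (auto simp: PiE_def extensional_def)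
  then show "c' \<in> (\<lambda>\<alpha>. restrict (c \<circ> \<alpha>) V) ` Aut V E"
    using restrict_mem_Aut[OF \<alpha>(1)] by (rule image_eqI)
next
  fix c' assume "c' \<in> (\<lambda>\<alpha>. restrict (c \<circ> \<alpha>) V) ` Aut V E"
  then obtain \<alpha> where \<alpha>: "is_aut V E \<alpha>" and c': "c' = restrict (c \<circ> \<alpha>) V"
    unfolding Aut_def by auto
  have "distinguishing V E (c \<circ> \<alpha>)"
    using c distinguishing_comp_aut[OF _ \<alpha>] unfolding dist_cols_def by blast
  then have "distinguishing V E c'" by (rule distinguishing_cong) (simp add: c')
  moreover have "c' \<in> V \<rightarrow>\<^sub>E {1..k}"
    using c c' is_aut_mem[OF \<alpha>] unfolding dist_cols_def by auto
  moreover have "equiv_col V E c' c"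
    using \<alpha> c' unfolding equiv_col_def by auto
  then have "equiv_col V E c c'" by (rule equiv_col_sym)
  ultimately show "c' \<in> col_equiv V E k `` {c}"
    using c unfolding col_equiv_def dist_cols_def by simp
qed

lemma card_col_equiv_class:
  assumes c: "c \<in> dist_cols V E k"
  shows "card (col_equiv V E k `` {c}) = card (Aut V E)"
proof -
  have "inj_on (\<lambda>\<alpha>. restrict (c \<circ> \<alpha>) V) (Aut V E)"
  proof (rule inj_onI)
    fix \<alpha> \<beta> assume "\<alpha> \<in> Aut V E" "\<beta> \<in> Aut V E" and eq: "restrict (c \<circ> \<alpha>) V = restrict (c \<circ> \<beta>) V"
    then have "is_aut V E \<alpha>" "is_aut V E \<beta>" "\<alpha> \<in> extensional V" "\<beta> \<in> extensional V"
      unfolding Aut_def by (auto simp: PiE_def)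
    moreover have "c (\<alpha> v) = c (\<beta> v)" if "v \<in> V" for v
      using fun_cong[OF eq, of v] that by simp
    ultimately show "\<alpha> = \<beta>"
      using distinguishing_imp_aut_eq[of V E c \<alpha> \<beta>] c unfolding dist_cols_def
      by (intro extensionalityI[of _ V]) auto
  qed
  then show ?thesis by (simp add: col_equiv_class[OF c] card_image)
qed

lemma card_Aut_mult_Phi:
  assumes "finite V"
  shows "card (Aut V E) * Phi k V E = card (dist_cols V E k)"
proof -
  have fin: "finite (dist_cols V E k)"
    by (rule finite_subset[of _ "V \<rightarrow>\<^sub>E {1..k}"]) (auto simp: dist_cols_def assms finite_PiE)
  have eq: "equiv (dist_cols V E k) (col_equiv V E k)" by (rule equiv_col_equiv)
  have "card (Aut V E) * card (dist_cols V E k // col_equiv V E k)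
      = card (\<Union> (dist_cols V E k // col_equiv V E k))"
  proof (rule card_partition)
    show "finite (dist_cols V E k // col_equiv V E k)"
      using fin equiv_type[OF eq] by (rule finite_quotient)
    show "finite (\<Union> (dist_cols V E k // col_equiv V E k))" using fin eq by (simp add: Union_quotient)
    show "card X = card (Aut V E)" if "X \<in> dist_cols V E k // col_equiv V E k" for X
      using that by (auto simp: quotient_def card_col_equiv_class)
    show "X \<inter> Y = {}" if "X \<in> dist_cols V E k // col_equiv V E k"
      "Y \<in> dist_cols V E k // col_equiv V E k" "X \<noteq> Y" for X Y
      using quotient_disj[OF eq that(1,2)] that(3) by blast
  qed
  then show ?thesis using eq by (simp add: Phi_eq_card_quotient Union_quotient)
qed

section \<open>Automorphisms of the grid\<close>

lemma mem_grid_V_iff [simp]: "p \<in> grid_V n \<longleftrightarrow> fst p < n \<and> snd p < n"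
  by (cases p) (simp add: grid_V_def path_V_def)

lemma grid_E_iff [simp]:
  "grid_E p q \<longleftrightarrow>
     fst p = fst q \<and> (snd p + 1 = snd q \<or> snd q + 1 = snd p) \<or>
     (fst p + 1 = fst q \<or> fst q + 1 = fst p) \<and> snd p = snd q"
  by (simp add: grid_E_def cart_E_def path_E_def)

lemma finite_grid_V: "finite (grid_V n)"
  by (simp add: grid_V_def path_V_def)

lemma card_grid_V: "card (grid_V n) = n * n"
  by (simp add: grid_V_def path_V_def)

definition rot90 :: "nat \<Rightarrow> nat \<times> nat \<Rightarrow> nat \<times> nat" where
  "rot90 n p = (snd p, n - 1 - fst p)"

definition rot180 :: "nat \<Rightarrow> nat \<times> nat \<Rightarrow> nat \<times> nat" where
  "rot180 n p = (n - 1 - fst p, n - 1 - snd p)"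

definition rot270 :: "nat \<Rightarrow> nat \<times> nat \<Rightarrow> nat \<times> nat" where
  "rot270 n p = (n - 1 - snd p, fst p)"

definition flip_x :: "nat \<Rightarrow> nat \<times> nat \<Rightarrow> nat \<times> nat" where
  "flip_x n p = (n - 1 - fst p, snd p)"

definition flip_y :: "nat \<Rightarrow> nat \<times> nat \<Rightarrow> nat \<times> nat" where
  "flip_y n p = (fst p, n - 1 - snd p)"

definition flip_diag :: "nat \<times> nat \<Rightarrow> nat \<times> nat" where
  "flip_diag p = (snd p, fst p)"

definition flip_antidiag :: "nat \<Rightarrow> nat \<times> nat \<Rightarrow> nat \<times> nat" where
  "flip_antidiag n p = (n - 1 - snd p, n - 1 - fst p)"

lemmas grid_sym_defs = rot90_def rot180_def rot270_def flip_x_def flip_y_def flip_diag_def flip_antidiag_def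

definition grid_syms :: "nat \<Rightarrow> (nat \<times> nat \<Rightarrow> nat \<times> nat) set" where
  "grid_syms n = {id, rot90 n, rot180 n, rot270 n, flip_x n, flip_y n, flip_diag, flip_antidiag n}"

lemma card_grid_syms_le: "card (grid_syms n) \<le> 8"
proof -
  let ?gs = "[id, rot90 n, rot180 n, rot270 n, flip_x n, flip_y n, flip_diag, flip_antidiag n]"
  have "grid_syms n = set ?gs" by (simp add: grid_syms_def)
  then have "card (grid_syms n) \<le> length ?gs" by (simp only: card_length)
  then show ?thesis by simp
qed

lemma is_aut_grid_syms:
  assumes "g \<in> grid_syms n" shows "is_aut (grid_V n) grid_E g"
proof -
  have "is_aut (grid_V n) grid_E (rot90 n)"
    by (rule is_aut_byWitness[where g' = "rot270 n"]) (auto simp: grid_sym_defs)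
  moreover have "is_aut (grid_V n) grid_E (rot180 n)"
    by (rule is_aut_byWitness[where g' = "rot180 n"]) (auto simp: grid_sym_defs)
  moreover have "is_aut (grid_V n) grid_E (rot270 n)"
    by (rule is_aut_byWitness[where g' = "rot90 n"]) (auto simp: grid_sym_defs)
  moreover have "is_aut (grid_V n) grid_E (flip_x n)"
    by (rule is_aut_byWitness[where g' = "flip_x n"]) (auto simp: grid_sym_defs)
  moreover have "is_aut (grid_V n) grid_E (flip_y n)"
    by (rule is_aut_byWitness[where g' = "flip_y n"]) (auto simp: grid_sym_defs)
  moreover have "is_aut (grid_V n) grid_E flip_diag"
    by (rule is_aut_byWitness[where g' = flip_diag]) (auto simp: grid_sym_defs)
  moreover have "is_aut (grid_V n) grid_E (flip_antidiag n)"
    by (rule is_aut_byWitness[where g' = "flip_antidiag n"]) (auto simp: grid_sym_defs)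
  ultimately show ?thesis
    using assms unfolding grid_syms_def by (elim insertE emptyE) (simp_all add: is_aut_id)
qed

(* (i, 0) is the last neighbour of (i - 1, 0) not yet known to be fixed, and (i, 1) the last
   such common neighbour of (i, 0) and (i - 1, 1). *)
lemma grid_aut_fixes_two_rows:
  assumes \<tau>: "is_aut (grid_V n) grid_E \<tau>" and "2 \<le> n"
    and fix00: "\<tau> (0, 0) = (0, 0)" and fix10: "\<tau> (1, 0) = (1, 0)" and "i < n"
  shows "\<tau> (i, 0) = (i, 0) \<and> \<tau> (i, 1) = (i, 1)"
  using \<open>i < n\<close>
proof (induction i rule: less_induct)
  case (less i)
  show ?case
  proof (cases i)
    case 0
    have "\<tau> (0, 1) = (0, 1)"
      by (rule aut_fixes_last_common_nbr[OF \<tau>, of "{(0, 0)}"]) (use \<open>2 \<le> n\<close> fix00 fix10 in auto)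
    then show ?thesis using 0 fix00 by simp
  next
    case (Suc h)
    have IH: "\<tau> (h', 0) = (h', 0) \<and> \<tau> (h', 1) = (h', 1)" if "h' \<le> h" for h'
      using less Suc that by simp
    have row0: "\<tau> (i, 0) = (i, 0)"
    proof (cases h)
      case 0
      then show ?thesis using Suc fix10 by simp
    next
      case Suc
      show ?thesis
      proof (rule aut_fixes_last_common_nbr[OF \<tau>, of "{(h, 0)}"])
        show "\<tau> z = z" if "z \<in> grid_V n" "\<forall>x\<in>{(h, 0)}. grid_E x z" "z \<noteq> (i, 0)" for z
          using that IH \<open>i = Suc h\<close> by (cases z) auto
      qed (use less \<open>i = Suc h\<close> IH in auto)
    qed
    have "\<tau> (i, 1) = (i, 1)"
    proof (rule aut_fixes_last_common_nbr[OF \<tau>, of "{(i, 0), (h, 1)}"])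
      show "\<tau> z = z" if "z \<in> grid_V n" "\<forall>x\<in>{(i, 0), (h, 1)}. grid_E x z" "z \<noteq> (i, 1)" for z
        using that IH \<open>i = Suc h\<close> by (cases z) auto
    qed (use less \<open>2 \<le> n\<close> \<open>i = Suc h\<close> IH row0 in auto)
    with row0 show ?thesis ..
  qed
qed

lemma grid_aut_fixing_edge_eq_id:
  assumes \<tau>: "is_aut (grid_V n) grid_E \<tau>" and "2 \<le> n"
    and "\<tau> (0, 0) = (0, 0)" and "\<tau> (1, 0) = (1, 0)" and x: "x \<in> grid_V n"
  shows "\<tau> x = x"
proof -
  have "\<tau> (i, j) = (i, j)" if "i < n" "j < n" for i j
    using that
  proof (induction j arbitrary: i rule: less_induct)
    case (less j)
    show ?case
    proof (cases "j \<le> 1")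
      case True
      then show ?thesis using grid_aut_fixes_two_rows[OF assms(1-4) \<open>i < n\<close>] by (cases j) auto
    next
      case False
      show ?thesis
      proof (rule aut_fixes_last_common_nbr[OF \<tau>, of "{(i, j - 1)}"])
        show "\<tau> z = z" if "z \<in> grid_V n" "\<forall>x\<in>{(i, j - 1)}. grid_E x z" "z \<noteq> (i, j)" for z
          using that less False by (cases z) auto
      qed (use less False in auto)
    qed
  qed
  then show ?thesis using x by (cases x) auto
qed

lemma grid_nbrs_origin: "2 \<le> n \<Longrightarrow> nbrs (grid_V n) grid_E (0, 0) = {(1, 0), (0, 1)}"
  by (auto simp: nbrs_def)

lemma three_le_card_grid_nbrs:
  assumes "(i, j) \<in> grid_V n" and "\<not> ((i = 0 \<or> i = n - 1) \<and> (j = 0 \<or> j = n - 1))"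
  shows "3 \<le> card (nbrs (grid_V n) grid_E (i, j))"
proof -
  have fin: "finite (nbrs (grid_V n) grid_E (i, j))"
    by (rule finite_subset[OF _ finite_grid_V]) (auto simp: nbrs_def)
  consider "0 < i \<and> i < n - 1" | "0 < j \<and> j < n - 1"
    using assms by fastforce
  then obtain u v w where "{u, v, w} \<subseteq> nbrs (grid_V n) grid_E (i, j)" "card {u, v, w} = 3"
  proof cases
    case 1
    let ?j' = "if j = 0 then 1 else j - 1"
    have "{(i - 1, j), (i + 1, j), (i, ?j')} \<subseteq> nbrs (grid_V n) grid_E (i, j)"
      using 1 assms(1) by (auto simp: nbrs_def)
    moreover have "card {(i - 1, j), (i + 1, j), (i, ?j')} = 3" using 1 by auto
    ultimately show ?thesis by (rule that)
  next
    case 2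
    let ?i' = "if i = 0 then 1 else i - 1"
    have "{(i, j - 1), (i, j + 1), (?i', j)} \<subseteq> nbrs (grid_V n) grid_E (i, j)"
      using 2 assms(1) by (auto simp: nbrs_def)
    moreover have "card {(i, j - 1), (i, j + 1), (?i', j)} = 3" using 2 by auto
    ultimately show ?thesis by (rule that)
  qed
  then show ?thesis using card_mono[OF fin] by metis
qed

lemma grid_aut_origin_corner:
  assumes \<sigma>: "is_aut (grid_V n) grid_E \<sigma>" and "2 \<le> n"
  shows "\<sigma> (0, 0) \<in> {(0, 0), (0, n - 1), (n - 1, 0), (n - 1, n - 1)}"
proof -
  obtain i j where ij: "\<sigma> (0, 0) = (i, j)" by fastforce
  have "(i, j) \<in> grid_V n" using is_aut_mem[OF \<sigma>, of "(0, 0)"] \<open>2 \<le> n\<close> ij by simp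
  moreover have "card (nbrs (grid_V n) grid_E (i, j)) = 2"
    using card_nbrs_aut[OF \<sigma>, of "(0, 0)"] grid_nbrs_origin[OF \<open>2 \<le> n\<close>] \<open>2 \<le> n\<close> ij by simp
  ultimately have "(i = 0 \<or> i = n - 1) \<and> (j = 0 \<or> j = n - 1)"
    using three_le_card_grid_nbrs by fastforce
  then show ?thesis using ij by auto
qed

lemma grid_syms_realise_corner_edge:
  assumes "2 \<le> n" and a: "a \<in> {(0, 0), (0, n - 1), (n - 1, 0), (n - 1, n - 1)}"
    and b: "b \<in> grid_V n" "grid_E a b"
  shows "\<exists>g\<in>grid_syms n. g (0, 0) = a \<and> g (1, 0) = b"
proof -
  obtain m where n: "n = Suc (Suc m)" using \<open>2 \<le> n\<close> by (metis add_2_eq_Suc le_Suc_ex)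
  obtain p q where pq: "b = (p, q)" by fastforce
  from a consider "a = (0, 0)" | "a = (0, Suc m)" | "a = (Suc m, 0)" | "a = (Suc m, Suc m)"
    unfolding n by auto
  then show ?thesis
  proof cases
    case 1
    then have "b = (1, 0) \<or> b = (0, 1)" using b pq by auto
    then show ?thesis using 1 by (auto simp: grid_syms_def flip_diag_def)
  next
    case 2
    then have "b = (0, m) \<or> b = (1, Suc m)" using b pq n by auto
    then show ?thesis using 2 n by (auto simp: grid_syms_def rot90_def flip_y_def)
  next
    case 3
    then have "b = (Suc m, 1) \<or> b = (m, 0)" using b pq n by auto
    then show ?thesis using 3 n by (auto simp: grid_syms_def rot270_def flip_x_def)
  next
    case 4
    then have "b = (m, Suc m) \<or> b = (Suc m, m)" using b pq n by auto
    then show ?thesis using 4 n by (auto simp: grid_syms_def rot180_def flip_antidiag_def)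
  qed
qed

lemma grid_aut_eq_sym:
  assumes \<sigma>: "is_aut (grid_V n) grid_E \<sigma>" and n: "2 \<le> n"
  obtains g where "g \<in> grid_syms n" and "\<And>x. x \<in> grid_V n \<Longrightarrow> \<sigma> x = g x"
proof -
  have in0: "(0, 0) \<in> grid_V n" "(1, 0) \<in> grid_V n" using n by auto
  have "\<sigma> (1, 0) \<in> grid_V n" "grid_E (\<sigma> (0, 0)) (\<sigma> (1, 0))"
    using is_aut_mem[OF \<sigma> in0(2)] is_aut_adj_iff[OF \<sigma> in0] by auto
  then obtain g where g: "g \<in> grid_syms n" "g (0, 0) = \<sigma> (0, 0)" "g (1, 0) = \<sigma> (1, 0)"
    using grid_syms_realise_corner_edge[OF n grid_aut_origin_corner[OF \<sigma> n]] by blast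
  have g_aut: "is_aut (grid_V n) grid_E g" using g(1) by (rule is_aut_grid_syms)
  let ?\<tau> = "inv_into (grid_V n) g \<circ> \<sigma>"
  have "?\<tau> (0, 0) = (0, 0)" "?\<tau> (1, 0) = (1, 0)"
    using inv_into_f_f[OF is_aut_inj_on[OF g_aut]] in0 g(2,3) by (metis comp_apply)+
  then have \<tau>_id: "?\<tau> x = x" if "x \<in> grid_V n" for x
    using grid_aut_fixing_edge_eq_id[OF is_aut_comp[OF is_aut_inv_into[OF g_aut] \<sigma>] n _ _ that] by blast
  show thesis
  proof (rule that[OF g(1)])
    fix x assume x: "x \<in> grid_V n"
    have "\<sigma> x = g (?\<tau> x)" using inv_into_aut_apply[OF g_aut is_aut_mem[OF \<sigma> x]] by simp
    then show "\<sigma> x = g x" using \<tau>_id[OF x] by simp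
  qed
qed

lemma Aut_grid_eq:
  assumes "2 \<le> n"
  shows "Aut (grid_V n) grid_E = (\<lambda>g. restrict g (grid_V n)) ` grid_syms n"
proof (intro equalityI subsetI)
  fix \<sigma> assume "\<sigma> \<in> Aut (grid_V n) grid_E"
  then have \<sigma>: "is_aut (grid_V n) grid_E \<sigma>" "\<sigma> \<in> extensional (grid_V n)"
    by (auto simp: Aut_def PiE_def)
  obtain g where g: "g \<in> grid_syms n" "\<And>x. x \<in> grid_V n \<Longrightarrow> \<sigma> x = g x"
    using grid_aut_eq_sym[OF \<sigma>(1) assms] by blast
  have "\<sigma> = restrict g (grid_V n)"
    using g(2) \<sigma>(2) by (intro extensionalityI[of _ "grid_V n"]) auto
  then show "\<sigma> \<in> (\<lambda>g. restrict g (grid_V n)) ` grid_syms n" using g(1) by (rule image_eqI)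
next
  fix \<sigma> assume "\<sigma> \<in> (\<lambda>g. restrict g (grid_V n)) ` grid_syms n"
  then show "\<sigma> \<in> Aut (grid_V n) grid_E" using restrict_mem_Aut is_aut_grid_syms by blast
qed

lemma card_Aut_grid:
  assumes "2 \<le> n"
  shows "card (Aut (grid_V n) grid_E) = 8"
proof -
  obtain m where n: "n = Suc (Suc m)" using assms by (metis add_2_eq_Suc le_Suc_ex)
  let ?ev = "\<lambda>\<sigma> :: nat \<times> nat \<Rightarrow> nat \<times> nat. (\<sigma> (0, 0), \<sigma> (1, 0))"
  have fin: "finite (grid_syms n)" by (simp add: grid_syms_def)
  have "8 = card (?ev ` grid_syms n)"
    unfolding n by (simp add: grid_syms_def grid_sym_defs)
  also have "?ev ` grid_syms n = ?ev ` Aut (grid_V n) grid_E"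
    unfolding Aut_grid_eq[OF assms] image_image using n by simp
  also have "card \<dots> \<le> card (Aut (grid_V n) grid_E)"
    by (rule card_image_le) (simp add: Aut_grid_eq[OF assms] fin)
  finally have "8 \<le> card (Aut (grid_V n) grid_E)" .
  moreover have "card (Aut (grid_V n) grid_E) \<le> 8"
    unfolding Aut_grid_eq[OF assms] using card_image_le[OF fin] card_grid_syms_le by (rule order_trans)
  ultimately show ?thesis by simp
qed

section \<open>Colourings invariant under a symmetry\<close>

definition inv_cols :: "'a set \<Rightarrow> nat \<Rightarrow> ('a \<Rightarrow> 'a) \<Rightarrow> ('a \<Rightarrow> nat) set" where
  "inv_cols V k g = {c \<in> V \<rightarrow>\<^sub>E {1..k}. \<forall>v\<in>V. c (g v) = c v}"

lemma inv_cols_Int_subset: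
  assumes "\<forall>v\<in>V. g' v \<in> V" and "\<forall>v\<in>V. h v = g (g' v)"
  shows "inv_cols V k g \<inter> inv_cols V k g' \<subseteq> inv_cols V k h"
proof
  fix c assume "c \<in> inv_cols V k g \<inter> inv_cols V k g'"
  then have c: "c \<in> V \<rightarrow>\<^sub>E {1..k}" "\<forall>v\<in>V. c (g v) = c v" "\<forall>v\<in>V. c (g' v) = c v"
    by (auto simp: inv_cols_def)
  have "c (h v) = c v" if "v \<in> V" for v
    using c(2,3) assms that by simp
  with c(1) show "c \<in> inv_cols V k h" by (simp add: inv_cols_def)
qed

lemma grid_inv_cols_Int_subset:
  assumes "g' \<in> grid_syms n" and "\<forall>p\<in>grid_V n. h p = g (g' p)"
  shows "inv_cols (grid_V n) k g \<inter> inv_cols (grid_V n) k g' \<subseteq> inv_cols (grid_V n) k h"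
proof (rule inv_cols_Int_subset)
  show "\<forall>p\<in>grid_V n. g' p \<in> grid_V n"
    using is_aut_mem[OF is_aut_grid_syms[OF assms(1)]] by blast
qed (rule assms(2))

lemma inv_cols_rot90_subset: "inv_cols (grid_V n) k (rot90 n) \<subseteq> inv_cols (grid_V n) k (rot180 n)"
  using grid_inv_cols_Int_subset[of "rot90 n" n "rot180 n" "rot90 n" k]
  by (simp add: grid_syms_def grid_sym_defs)

lemma inv_cols_rot270_subset: "inv_cols (grid_V n) k (rot270 n) \<subseteq> inv_cols (grid_V n) k (rot180 n)"
  using grid_inv_cols_Int_subset[of "rot270 n" n "rot180 n" "rot270 n" k]
  by (simp add: grid_syms_def grid_sym_defs)

lemma distinguishing_notin_inv_cols:
  assumes "distinguishing V E c" and "is_aut V E g" and "v \<in> V" "g v \<noteq> v"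
  shows "c \<notin> inv_cols V k g"
  using assms unfolding distinguishing_def inv_cols_def by blast

lemma grid_dist_cols_eq:
  fixes n k defines "I g \<equiv> inv_cols (grid_V n) k g"
  assumes n: "2 \<le> n"
  shows "dist_cols (grid_V n) grid_E k = (grid_V n \<rightarrow>\<^sub>E {1..k}) -
    (I (rot180 n) \<union> I (flip_x n) \<union> I (flip_y n) \<union> (I flip_diag \<union> I (flip_antidiag n)))"
    (is "_ = _ - ?U")
proof (intro equalityI subsetI)
  fix c assume c: "c \<in> dist_cols (grid_V n) grid_E k"
  then have dc: "distinguishing (grid_V n) grid_E c" by (simp add: dist_cols_def)
  have moved: "g v \<noteq> v \<Longrightarrow> g \<in> grid_syms n \<Longrightarrow> v \<in> grid_V n \<Longrightarrow> c \<notin> I g" for g v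
    unfolding I_def using distinguishing_notin_inv_cols[OF dc is_aut_grid_syms] by blast
  have "(0, 0) \<in> grid_V n" "(1, 0) \<in> grid_V n" using n by auto
  then have "c \<notin> ?U"
    using moved[of "rot180 n" "(0, 0)"] moved[of "flip_x n" "(0, 0)"] moved[of "flip_y n" "(0, 0)"]
      moved[of flip_diag "(1, 0)"] moved[of "flip_antidiag n" "(0, 0)"] n
    by (auto simp: grid_syms_def grid_sym_defs)
  with c show "c \<in> (grid_V n \<rightarrow>\<^sub>E {1..k}) - ?U" by (simp add: dist_cols_def)
next
  fix c assume c: "c \<in> (grid_V n \<rightarrow>\<^sub>E {1..k}) - ?U"
  have "distinguishing (grid_V n) grid_E c"
    unfolding distinguishing_def
  proof (intro allI impI ballI)
    fix \<sigma> v assume \<sigma>: "is_aut (grid_V n) grid_E \<sigma> \<and> (\<forall>v\<in>grid_V n. c (\<sigma> v) = c v)"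
      and v: "v \<in> grid_V n"
    obtain g where g: "g \<in> grid_syms n" "\<And>x. x \<in> grid_V n \<Longrightarrow> \<sigma> x = g x"
      using grid_aut_eq_sym[OF conjunct1[OF \<sigma>] n] by blast
    have "c \<in> I g" using c \<sigma> g(2) by (simp add: I_def inv_cols_def)
    moreover have "c \<notin> I (rot90 n)" "c \<notin> I (rot270 n)"
      using c inv_cols_rot90_subset inv_cols_rot270_subset unfolding I_def by blast+
    ultimately have "g = id" using g(1) c unfolding grid_syms_def by auto
    then show "\<sigma> v = v" using g(2) v by simp
  qed
  with c show "c \<in> dist_cols (grid_V n) grid_E k" by (simp add: dist_cols_def)
qed

lemma grid_inv_cols_overlaps:
  fixes n k defines "I g \<equiv> inv_cols (grid_V n) k g"
  shows "I (rot180 n) \<inter> I (flip_x n) = I (flip_x n) \<inter> I (flip_y n)"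
    and "(I (rot180 n) \<union> I (flip_x n)) \<inter> I (flip_y n) = I (flip_x n) \<inter> I (flip_y n)"
    and "(I (rot180 n) \<union> I (flip_x n) \<union> I (flip_y n)) \<inter> (I flip_diag \<union> I (flip_antidiag n))
       = I flip_diag \<inter> I (flip_antidiag n)"
proof -
  have comp: "I g \<inter> I g' \<subseteq> I h" if "g' \<in> grid_syms n" "\<forall>p\<in>grid_V n. h p = g (g' p)" for g g' h
    unfolding I_def using that by (rule grid_inv_cols_Int_subset)
  have "I (rot180 n) \<inter> I (flip_x n) \<subseteq> I (flip_y n)" "I (flip_x n) \<inter> I (flip_y n) \<subseteq> I (rot180 n)"
    "I (rot180 n) \<inter> I (flip_y n) \<subseteq> I (flip_x n)"
    "I flip_diag \<inter> I (flip_antidiag n) \<subseteq> I (rot180 n)"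
    "I (rot180 n) \<inter> I flip_diag \<subseteq> I (flip_antidiag n)"
    "I (rot180 n) \<inter> I (flip_antidiag n) \<subseteq> I flip_diag"
    "I (flip_x n) \<inter> I flip_diag \<subseteq> I (rot270 n)" "I (flip_x n) \<inter> I (flip_antidiag n) \<subseteq> I (rot90 n)"
    "I (flip_y n) \<inter> I flip_diag \<subseteq> I (rot90 n)" "I (flip_y n) \<inter> I (flip_antidiag n) \<subseteq> I (rot270 n)"
    by (rule comp; simp add: grid_syms_def grid_sym_defs)+
  moreover have "I (rot90 n) \<subseteq> I (rot180 n)" "I (rot270 n) \<subseteq> I (rot180 n)"
    unfolding I_def by (rule inv_cols_rot90_subset inv_cols_rot270_subset)+
  ultimately show "I (rot180 n) \<inter> I (flip_x n) = I (flip_x n) \<inter> I (flip_y n)"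
    and "(I (rot180 n) \<union> I (flip_x n)) \<inter> I (flip_y n) = I (flip_x n) \<inter> I (flip_y n)"
    and "(I (rot180 n) \<union> I (flip_x n) \<union> I (flip_y n)) \<inter> (I flip_diag \<union> I (flip_antidiag n))
       = I flip_diag \<inter> I (flip_antidiag n)"
    by blast+
qed

section \<open>Counting invariant colourings\<close>

lemma card_Un_overlapping:
  assumes "finite A" "finite B" "finite C" "finite D" "finite E"
    and "A \<inter> B = B \<inter> C" "(A \<union> B) \<inter> C = B \<inter> C" "(A \<union> B \<union> C) \<inter> (D \<union> E) = D \<inter> E"
  shows "card (A \<union> B \<union> C \<union> (D \<union> E)) + 2 * card (B \<inter> C) + 2 * card (D \<inter> E)
       = card A + card B + card C + card D + card E"
  using card_Un_Int[of A B] card_Un_Int[of "A \<union> B" C] card_Un_Int[of D E]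
    card_Un_Int[of "A \<union> B \<union> C" "D \<union> E"] assms by simp

lemma card_cols_factoring_retraction:
  assumes V: "finite V" and R: "R \<subseteq> V" "\<forall>v\<in>V. rep v \<in> R" "\<forall>r\<in>R. rep r = r"
  shows "card {c \<in> V \<rightarrow>\<^sub>E {1..k}. \<forall>v\<in>V. c v = c (rep v)} = k ^ card R"
proof -
  let ?S = "{c \<in> V \<rightarrow>\<^sub>E {1..k}. \<forall>v\<in>V. c v = c (rep v)}"
  have "bij_betw (\<lambda>c. restrict c R) ?S (R \<rightarrow>\<^sub>E {1..k})"
  proof (rule bij_betw_byWitness[where f' = "\<lambda>d. restrict (d \<circ> rep) V"])
    show "\<forall>c\<in>?S. restrict (restrict c R \<circ> rep) V = c"
    proof
      fix c assume c: "c \<in> ?S"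
      show "restrict (restrict c R \<circ> rep) V = c"
      proof
        fix v show "restrict (restrict c R \<circ> rep) V v = c v"
          using c R(2) by (cases "v \<in> V") (auto simp: PiE_def extensional_def)
      qed
    qed
    show "\<forall>d\<in>R \<rightarrow>\<^sub>E {1..k}. restrict (restrict (d \<circ> rep) V) R = d"
    proof
      fix d assume d: "d \<in> R \<rightarrow>\<^sub>E {1..k}"
      show "restrict (restrict (d \<circ> rep) V) R = d"
      proof
        fix r show "restrict (restrict (d \<circ> rep) V) R r = d r"
          using d R(1,3) by (cases "r \<in> R") (auto simp: PiE_def extensional_def)
      qed
    qed
    show "(\<lambda>c. restrict c R) ` ?S \<subseteq> R \<rightarrow>\<^sub>E {1..k}" using R(1) by auto
    show "(\<lambda>d. restrict (d \<circ> rep) V) ` (R \<rightarrow>\<^sub>E {1..k}) \<subseteq> ?S"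
    proof (intro image_subsetI CollectI conjI ballI)
      fix d v assume d: "d \<in> R \<rightarrow>\<^sub>E {1..k}" and v: "v \<in> V"
      have "rep v \<in> R" "rep v \<in> V" using R(1,2) v by auto
      then show "restrict (d \<circ> rep) V v = restrict (d \<circ> rep) V (rep v)"
        using R(3) v by simp
    next
      fix d assume "d \<in> R \<rightarrow>\<^sub>E {1..k}"
      then show "restrict (d \<circ> rep) V \<in> V \<rightarrow>\<^sub>E {1..k}" using R(2) by auto
    qed
  qed
  then have "card ?S = card (R \<rightarrow>\<^sub>E {1..k})" by (rule bij_betw_same_card)
  also have "\<dots> = k ^ card R" using finite_subset[OF R(1) V] by (simp add: card_PiE)
  finally show ?thesis .
qed

lemma inv_cols_eq_factoring:
  assumes g: "\<forall>v\<in>V. g v \<in> V" and rep: "\<forall>v\<in>V. rep v = v \<or> rep v = g v" "\<forall>v\<in>V. rep (g v) = rep v"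
  shows "inv_cols V k g = {c \<in> V \<rightarrow>\<^sub>E {1..k}. \<forall>v\<in>V. c v = c (rep v)}"
proof -
  have "(\<forall>v\<in>V. c (g v) = c v) \<longleftrightarrow> (\<forall>v\<in>V. c v = c (rep v))" for c :: "'a \<Rightarrow> nat"
  proof (intro iffI ballI)
    fix v assume inv: "\<forall>v\<in>V. c (g v) = c v" and v: "v \<in> V"
    then show "c v = c (rep v)" using rep(1) by (cases "rep v = v") auto
  next
    fix v assume fac: "\<forall>v\<in>V. c v = c (rep v)" and v: "v \<in> V"
    then have "c (g v) = c (rep (g v))" using g by simp
    also have "\<dots> = c v" using fac rep(2) v by simp
    finally show "c (g v) = c v" .
  qed
  then show ?thesis by (auto simp: inv_cols_def)
qed

lemma inv_cols_Int_eq_factoring: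
  assumes g: "\<forall>v\<in>V. g v \<in> V" and h: "\<forall>v\<in>V. h v \<in> V"
    and rep: "\<forall>v\<in>V. rep v = v \<or> rep v = g v \<or> rep v = h v \<or> rep v = g (h v)"
      "\<forall>v\<in>V. rep (g v) = rep v" "\<forall>v\<in>V. rep (h v) = rep v"
  shows "inv_cols V k g \<inter> inv_cols V k h = {c \<in> V \<rightarrow>\<^sub>E {1..k}. \<forall>v\<in>V. c v = c (rep v)}"
proof -
  have "(\<forall>v\<in>V. c (g v) = c v) \<and> (\<forall>v\<in>V. c (h v) = c v) \<longleftrightarrow> (\<forall>v\<in>V. c v = c (rep v))"
    for c :: "'a \<Rightarrow> nat"
  proof (intro iffI ballI conjI)
    fix v assume inv: "(\<forall>v\<in>V. c (g v) = c v) \<and> (\<forall>v\<in>V. c (h v) = c v)" and v: "v \<in> V"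
    then have "c (g (h v)) = c v" using h by simp
    then show "c v = c (rep v)" using inv v rep(1) by auto
  next
    fix v assume fac: "\<forall>v\<in>V. c v = c (rep v)" and v: "v \<in> V"
    then have "c (g v) = c (rep (g v))" "c (h v) = c (rep (h v))" using g h by simp_all
    then show "c (g v) = c v" "c (h v) = c v" using fac rep(2,3) v by simp_all
  qed
  then show ?thesis by (auto simp: inv_cols_def)
qed

lemma card_inv_cols_by_retraction:
  assumes "finite V" "R \<subseteq> V" "\<forall>v\<in>V. rep v \<in> R" "\<forall>r\<in>R. rep r = r"
    and "\<forall>v\<in>V. g v \<in> V" "\<forall>v\<in>V. rep v = v \<or> rep v = g v" "\<forall>v\<in>V. rep (g v) = rep v"
  shows "card (inv_cols V k g) = k ^ card R"
  using inv_cols_eq_factoring[OF assms(5-7)] card_cols_factoring_retraction[OF assms(1-4)] by simp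

lemma card_inv_cols_Int_by_retraction:
  assumes "finite V" "R \<subseteq> V" "\<forall>v\<in>V. rep v \<in> R" "\<forall>r\<in>R. rep r = r"
    and "\<forall>v\<in>V. g v \<in> V" "\<forall>v\<in>V. h v \<in> V"
    and "\<forall>v\<in>V. rep v = v \<or> rep v = g v \<or> rep v = h v \<or> rep v = g (h v)"
    and "\<forall>v\<in>V. rep (g v) = rep v" "\<forall>v\<in>V. rep (h v) = rep v"
  shows "card (inv_cols V k g \<inter> inv_cols V k h) = k ^ card R"
  using inv_cols_Int_eq_factoring[OF assms(5-9)] card_cols_factoring_retraction[OF assms(1-4)] by simp

lemma card_inv_cols_flip_x: "card (inv_cols (grid_V n) k (flip_x n)) = k ^ (n * ((n + 1) div 2))"
proof -
  have "card (inv_cols (grid_V n) k (flip_x n)) = k ^ card ({0..<(n + 1) div 2} \<times> {0..<n})"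
    by (rule card_inv_cols_by_retraction[where rep = "\<lambda>p. (min (fst p) (n - 1 - fst p), snd p)"])
      (auto simp: finite_grid_V flip_x_def)
  then show ?thesis by (simp add: mult.commute)
qed

lemma card_inv_cols_flip_y: "card (inv_cols (grid_V n) k (flip_y n)) = k ^ (n * ((n + 1) div 2))"
proof -
  have "card (inv_cols (grid_V n) k (flip_y n)) = k ^ card ({0..<n} \<times> {0..<(n + 1) div 2})"
    by (rule card_inv_cols_by_retraction[where rep = "\<lambda>p. (fst p, min (snd p) (n - 1 - snd p))"])
      (auto simp: finite_grid_V flip_y_def)
  then show ?thesis by simp
qed

lemma card_inv_cols_flips:
  "card (inv_cols (grid_V n) k (flip_x n) \<inter> inv_cols (grid_V n) k (flip_y n)) = k ^ (((n + 1) div 2)\<^sup>2)"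
proof -
  have "card (inv_cols (grid_V n) k (flip_x n) \<inter> inv_cols (grid_V n) k (flip_y n))
      = k ^ card ({0..<(n + 1) div 2} \<times> {0..<(n + 1) div 2})"
    by (rule card_inv_cols_Int_by_retraction
        [where rep = "\<lambda>p. (min (fst p) (n - 1 - fst p), min (snd p) (n - 1 - snd p))"])
      (auto simp: finite_grid_V flip_x_def flip_y_def)
  then show ?thesis by (simp add: power2_eq_square)
qed

lemma sum_lessThan_diff: "(\<Sum>i<n. n - i) = n * (n + 1) div (2::nat)"
proof -
  have "(\<Sum>i<n. n - i) = (\<Sum>i<n. Suc (n - Suc i))" by (rule sum.cong) auto
  also have "\<dots> = (\<Sum>i<n. Suc i)" by (rule sum.nat_diff_reindex)
  also have "\<dots> = n * (n + 1) div 2" by (induction n) auto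
  finally show ?thesis .
qed

lemma card_inv_cols_flip_diag: "card (inv_cols (grid_V n) k flip_diag) = k ^ (n * (n + 1) div 2)"
proof -
  have "card (inv_cols (grid_V n) k flip_diag) = k ^ card (SIGMA i:{..<n}. {i..<n})"
    by (rule card_inv_cols_by_retraction[where rep = "\<lambda>p. (min (fst p) (snd p), max (fst p) (snd p))"])
      (auto simp: finite_grid_V flip_diag_def)
  then show ?thesis by (simp add: sum_lessThan_diff)
qed

lemma card_inv_cols_flip_antidiag: "card (inv_cols (grid_V n) k (flip_antidiag n)) = k ^ (n * (n + 1) div 2)"
proof -
  have "card (inv_cols (grid_V n) k (flip_antidiag n)) = k ^ card (SIGMA i:{..<n}. {..<n - i})"
    by (rule card_inv_cols_by_retraction
        [where rep = "\<lambda>p. if fst p + snd p < n then p else flip_antidiag n p"])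
      (auto simp: finite_grid_V flip_antidiag_def)
  then show ?thesis by (simp add: sum_lessThan_diff)
qed

(* Orbit representatives: the left half of the grid and, for odd n, the lower half of the
   middle column. *)
lemma card_inv_cols_rot180: "card (inv_cols (grid_V n) k (rot180 n)) = k ^ ((n * n + 1) div 2)"
proof -
  let ?R = "{0..<n div 2} \<times> {0..<n} \<union> {p. 2 * fst p + 1 = n \<and> snd p < (n + 1) div 2}"
  have "card (inv_cols (grid_V n) k (rot180 n)) = k ^ card ?R"
    by (rule card_inv_cols_by_retraction[where rep = "\<lambda>p. if 2 * fst p + 1 < n \<or> 2 * fst p + 1 = n
        \<and> 2 * snd p + 1 \<le> n then p else rot180 n p"])
      (auto simp: finite_grid_V rot180_def)
  moreover have "card ?R = (n * n + 1) div 2"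
  proof (cases "even n")
    case True
    then obtain p where p: "n = 2 * p" by blast
    then have "?R = {0..<p} \<times> {0..<n}" by auto
    then show ?thesis using p by simp
  next
    case False
    then obtain p where p: "n = 2 * p + 1" using oddE by blast
    then have "?R = {0..<p} \<times> {0..<n} \<union> {p} \<times> {0..<p + 1}" by auto
    moreover have "card ({0..<p} \<times> {0..<n} \<union> {p} \<times> {0..<p + 1}) = p * n + (p + 1)"
      by (subst card_Un_disjoint) auto
    ultimately show ?thesis using p by (simp add: algebra_simps)
  qed
  ultimately show ?thesis by simp
qed

lemma sum_lessThan_double_diff: "(\<Sum>i<p. 2 * p - i - i) = p * (p + 1 :: nat)"
proof -
  have "(\<Sum>i<p. 2 * p - i - i) = (\<Sum>i<p. 2 * (p - Suc i) + 2)" by (rule sum.cong) auto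
  also have "\<dots> = (\<Sum>i<p. 2 * i + 2)" by (rule sum.nat_diff_reindex)
  also have "\<dots> = p * (p + 1)" by (induction p) auto
  finally show ?thesis .
qed

lemma sum_lessThan_double_diff_Suc: "(\<Sum>i<Suc p. 2 * p + 1 - i - i) = (p + 1) * (p + 1)"
proof -
  have "(\<Sum>i<Suc p. 2 * p + 1 - i - i) = (\<Sum>i<Suc p. 2 * (Suc p - Suc i) + 1)" by (rule sum.cong) auto
  also have "\<dots> = (\<Sum>i<Suc p. 2 * i + 1)" by (rule sum.nat_diff_reindex)
  also have "\<dots> = (p + 1) * (p + 1)" by (induction p) auto
  finally show ?thesis .
qed

lemma card_diag_antidiag_reps: "card (SIGMA i:{..<(n + 1) div 2}. {i..<n - i}) = (n + 1) div 2 * ((n + 2) div 2)"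
proof -
  have "card (SIGMA i:{..<(n + 1) div 2}. {i..<n - i}) = (\<Sum>i<(n + 1) div 2. n - i - i)" by simp
  also have "\<dots> = (n + 1) div 2 * ((n + 2) div 2)"
  proof (cases "even n")
    case True
    then obtain p where "n = 2 * p" by blast
    then show ?thesis using sum_lessThan_double_diff[of p] by simp
  next
    case False
    then obtain p where "n = 2 * p + 1" using oddE by blast
    then show ?thesis using sum_lessThan_double_diff_Suc[of p] by simp
  qed
  finally show ?thesis .
qed

(* Orbit representatives: the points (i, j) with i <= j and i + j < n. *)
lemma card_inv_cols_diags:
  "card (inv_cols (grid_V n) k flip_diag \<inter> inv_cols (grid_V n) k (flip_antidiag n))
    = k ^ ((n + 1) div 2 * ((n + 2) div 2))"
proof -
  have "card (inv_cols (grid_V n) k flip_diag \<inter> inv_cols (grid_V n) k (flip_antidiag n))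
      = k ^ card (SIGMA i:{..<(n + 1) div 2}. {i..<n - i})"
    by (rule card_inv_cols_Int_by_retraction[where rep = "\<lambda>p.
        if min (fst p) (snd p) + max (fst p) (snd p) < n
        then (min (fst p) (snd p), max (fst p) (snd p))
        else (n - 1 - max (fst p) (snd p), n - 1 - min (fst p) (snd p))"])
      (auto simp: finite_grid_V flip_diag_def flip_antidiag_def min_def max_def)
  then show ?thesis unfolding card_diag_antidiag_reps .
qed

lemma card_dist_cols_grid:
  assumes n: "2 \<le> n"
  shows "card (dist_cols (grid_V n) grid_E k) + k ^ ((n * n + 1) div 2)
      + 2 * k ^ (n * ((n + 1) div 2)) + 2 * k ^ (n * (n + 1) div 2)
    = k ^ (n * n) + 2 * k ^ (((n + 1) div 2)\<^sup>2) + 2 * k ^ ((n + 1) div 2 * ((n + 2) div 2))"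
proof -
  let ?Col = "grid_V n \<rightarrow>\<^sub>E {1..k}"
  let ?I = "inv_cols (grid_V n) k"
  let ?U = "?I (rot180 n) \<union> ?I (flip_x n) \<union> ?I (flip_y n) \<union> (?I flip_diag \<union> ?I (flip_antidiag n))"
  have fin_Col: "finite ?Col" by (simp add: finite_grid_V finite_PiE)
  have I_sub: "?I g \<subseteq> ?Col" for g by (auto simp: inv_cols_def)
  then have fin_I: "finite (?I g)" for g using fin_Col by (rule finite_subset)
  have "card (dist_cols (grid_V n) grid_E k) + card ?U = card ?Col"
    unfolding grid_dist_cols_eq[OF n]
    using card_Diff_subset[of ?U ?Col] card_mono[OF fin_Col, of ?U] I_sub fin_I by auto
  moreover have "card ?Col = k ^ (n * n)" by (simp add: card_PiE finite_grid_V card_grid_V)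
  moreover have "card ?U + 2 * card (?I (flip_x n) \<inter> ?I (flip_y n))
      + 2 * card (?I flip_diag \<inter> ?I (flip_antidiag n))
    = card (?I (rot180 n)) + card (?I (flip_x n)) + card (?I (flip_y n))
      + card (?I flip_diag) + card (?I (flip_antidiag n))"
    by (rule card_Un_overlapping[OF fin_I fin_I fin_I fin_I fin_I grid_inv_cols_overlaps])
  ultimately show ?thesis
    by (simp add: card_inv_cols_rot180 card_inv_cols_flip_x card_inv_cols_flip_y card_inv_cols_flip_diag
        card_inv_cols_flip_antidiag card_inv_cols_flips card_inv_cols_diags)
qed

lemma nat_ceiling_half: "nat \<lceil>real a / 2\<rceil> = (a + 1) div 2"
proof (cases "even a")
  case True
  then obtain p where p: "a = 2 * p" by blast
  then have "\<lceil>real a / 2\<rceil> = int p" by (intro ceiling_unique) auto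
  then show ?thesis using p by simp
next
  case False
  then obtain p where p: "a = 2 * p + 1" using oddE by blast
  then have "\<lceil>real a / 2\<rceil> = int p + 1" by (intro ceiling_unique) auto
  then show ?thesis using p by simp
qed

theorem theorem5p2:
  fixes n k :: nat
  assumes "n \<ge> 3" and "k \<ge> 2"
  shows "real (Phi k (grid_V n) grid_E) =
    (1/8) * ( real k ^ (n^2)
            - real k ^ nat \<lceil>real (n^2) / 2\<rceil>
            - 2 * real k ^ (n * nat \<lceil>real n / 2\<rceil>)
            - 2 * real k ^ (n * (n + 1) div 2)
            + 2 * real k ^ (nat \<lceil>real n / 2\<rceil> ^ 2)
            + 2 * real k ^ (nat \<lceil>real n / 2\<rceil> * nat \<lceil>real (n + 1) / 2\<rceil>))"
proof -
  (* The identity holds for n >= 2 and every k. *)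
  have n: "2 \<le> n" using assms(1) by simp
  have "8 * Phi k (grid_V n) grid_E = card (dist_cols (grid_V n) grid_E k)"
    using card_Aut_mult_Phi[OF finite_grid_V] card_Aut_grid[OF n] by metis
  then have "8 * real (Phi k (grid_V n) grid_E) + real k ^ ((n * n + 1) div 2)
      + 2 * real k ^ (n * ((n + 1) div 2)) + 2 * real k ^ (n * (n + 1) div 2)
    = real k ^ (n * n) + 2 * real k ^ (((n + 1) div 2)\<^sup>2) + 2 * real k ^ ((n + 1) div 2 * ((n + 2) div 2))"
    using arg_cong[OF card_dist_cols_grid[OF n, of k], of real] by simp
  moreover have "nat \<lceil>real (n\<^sup>2) / 2\<rceil> = (n * n + 1) div 2" "nat \<lceil>real n / 2\<rceil> = (n + 1) div 2"
    "nat \<lceil>real (n + 1) / 2\<rceil> = (n + 2) div 2"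
    using nat_ceiling_half[of "n\<^sup>2"] nat_ceiling_half[of n] nat_ceiling_half[of "n + 1"]
    by (simp_all add: power2_eq_square)
  ultimately show ?thesis by (simp add: power2_eq_square)
qed

end
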